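(* For every $w\in W^\star$ and every integer $n\ge1$, $$(B^\dagger)^n|0,w\rangle=2^{-n/2}|n,w\rangle\qquad\text{and}\qquad B^\dagger B|n,w\rangle=2^{-1}|n,w\rangle.$$
   Context: $\Omega=\{0,1\}^{\mathbb N}$ with the shift $\sigma$; for $a\in\{0,1\}$, $ax=(a,x_1,\dots)$. $\mu$ is the measure of maximal entropy (uniform Bernoulli product measure), $L^2(\mu)$ the Hilbert space of square-integrable functions. Ruelle operator $L\phi(x)=\frac12(\phi(0x)+\phi(1x))$; Koopman operator $K\phi=\phi\circ\sigma$; $B=2^{-1/2}L$, $B^\dagger=2^{-1/2}K$. $W$ is the set of finite words over $\{0,1\}$ (including the empty word $\varepsilon$), $\ell(v)$ the length of $v$, $uv$ concatenation, $[v]$ the cylinder of sequences starting with $v$, $\chi_{[v]}$ its indicator. For nonempty $v$, $e_v=2^{\ell(v)/2}(\chi_{[v1]}-\chi_{[v0]})$; also $e^0_\varepsilon=-2^{1/2}\chi_{[0]}$, $e^1_\varepsilon=2^{1/2}\chi_{[1]}$. Define $|0\rangle=2^{-1/2}(e^0_\varepsilon+e^1_\varepsilon)$ and $|n\rangle=2^{-n/2}\sum_{\ell(v)=n}e_v$ for $n\ge1$. For $w\in W$ define $|0,w\rangle=2^{-1/2}(e_{0w}-e_{1w})$ and, for $n\ge1$, $|n,w\rangle=2^{-(n+1)/2}\big(\sum_{\ell(u)=n}e_{u0w}-\sum_{\ell(u)=n}e_{u1w}\big)$. Let $W^\star=\{\star\}\cup W$ and set $|n,\star\rangle=|n\rangle$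 for all $n\ge0$. *)

theory Defs
  imports Complex_Main
begin

text \<open>The sequence space Omega = {0,1}^N, with the letter 0 encoded as False and 1 as True.
  Elements of L^2(mu) are represented by real-valued functions on Omega; the operators
  are defined pointwise (identities below are pointwise, hence in particular mu-a.e.).\<close>

type_synonym seq = "nat \<Rightarrow> bool"

definition shift :: "seq \<Rightarrow> seq" where
  "shift x = (\<lambda>i. x (Suc i))"

definition prepend :: "bool \<Rightarrow> seq \<Rightarrow> seq" where
  "prepend a x = (\<lambda>i. case i of 0 \<Rightarrow> a | Suc j \<Rightarrow> x j)"

definition cyl :: "bool list \<Rightarrow> seq set" where
  "cyl v = {x. \<forall>i<length v. x i = v ! i}"

definition chi :: "bool list \<Rightarrow> seq \<Rightarrow> real" where
  "chi v = (\<lambda>x. if x \<in> cyl v then 1 else 0)"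

definition ruelle :: "(seq \<Rightarrow> real) \<Rightarrow> seq \<Rightarrow> real" where
  "ruelle \<phi> x = (\<phi> (prepend False x) + \<phi> (prepend True x)) / 2"

definition koopman :: "(seq \<Rightarrow> real) \<Rightarrow> seq \<Rightarrow> real" where
  "koopman \<phi> = \<phi> \<circ> shift"

definition Bop :: "(seq \<Rightarrow> real) \<Rightarrow> seq \<Rightarrow> real" where
  "Bop \<phi> = (\<lambda>x. ruelle \<phi> x / sqrt 2)"

definition Bdag :: "(seq \<Rightarrow> real) \<Rightarrow> seq \<Rightarrow> real" where
  "Bdag \<phi> = (\<lambda>x. koopman \<phi> x / sqrt 2)"

definition e :: "bool list \<Rightarrow> seq \<Rightarrow> real" where
  "e v = (\<lambda>x. 2 powr (real (length v) / 2) * (chi (v @ [True]) x - chi (v @ [False]) x))"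

definition e0_eps :: "seq \<Rightarrow> real" where
  "e0_eps = (\<lambda>x. - sqrt 2 * chi [False] x)"

definition e1_eps :: "seq \<Rightarrow> real" where
  "e1_eps = (\<lambda>x. sqrt 2 * chi [True] x)"

definition ket_star :: "nat \<Rightarrow> seq \<Rightarrow> real" where
  "ket_star n = (if n = 0 then (\<lambda>x. 2 powr (-1/2) * (e0_eps x + e1_eps x))
     else (\<lambda>x. 2 powr (- real n / 2) * (\<Sum>v\<in>{v::bool list. length v = n}. e v x)))"

definition ket_word :: "nat \<Rightarrow> bool list \<Rightarrow> seq \<Rightarrow> real" where
  "ket_word n w = (if n = 0 then (\<lambda>x. 2 powr (-1/2) * (e (False # w) x - e (True # w) x))
     else (\<lambda>x. 2 powr (- (real n + 1) / 2) *
              ((\<Sum>u\<in>{u::bool list. length u = n}. e (u @ False # w) x)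
             - (\<Sum>u\<in>{u::bool list. length u = n}. e (u @ True # w) x))))"

text \<open>W^star = {star} \<union> W is modelled as bool list option, None being star.\<close>
fun ket :: "nat \<Rightarrow> bool list option \<Rightarrow> seq \<Rightarrow> real" where
  "ket n None = ket_star n"
| "ket n (Some w) = ket_word n w"

end

theory Submission
  imports Defs
begin

(* Both identities come from one fact: each vector of the family is the pull-back of its
   predecessor along the shift, |n+1,w> = K |n,w>. Pulling back a cylinder indicator gives the
   sum of the indicators of its two one-letter extensions, so K e_v = (e_0v + e_1v) / sqrt 2;
   summing over all words of length n yields the level-(n+1) sums, and the normalisation
   absorbs the factor sqrt 2. Hence (B^dagger)^n |0,w> = 2^(-n/2) K^n |0,w>, and for n >= 1
   the vector |n,w> lies in the range of K, on which B^dagger B = K L / 2 acts as 1/2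
   because L K = id. *)

lemma chi_Cons: "chi (a # v) x = (if x 0 = a then chi v (shift x) else 0)"
  by (auto simp: chi_def cyl_def shift_def less_Suc_eq_0_disj)

lemma chi_shift: "chi v (shift x) = chi (False # v) x + chi (True # v) x"
  by (cases "x 0") (auto simp: chi_Cons)

lemma powr_add_half: "(2::real) powr (a + 1/2) = 2 powr a * sqrt 2"
  by (simp add: powr_add powr_half_sqrt)

lemma powr_Suc_half: "(2::real) powr (real (Suc n) / 2) = 2 powr (real n / 2) * sqrt 2"
  using powr_add_half[of "real n / 2"] by (simp add: add_divide_distrib ac_simps)

lemma e_shift: "e v (shift x) = (e (False # v) x + e (True # v) x) / sqrt 2"
proof -
  have "e (False # v) x + e (True # v) x
      = 2 powr (real (Suc (length v)) / 2) * (chi (v @ [True]) (shift x) - chi (v @ [False]) (shift x))"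
    unfolding e_def by (simp add: chi_shift algebra_simps)
  also have "\<dots> = sqrt 2 * e v (shift x)"
    unfolding e_def powr_Suc_half by simp
  finally show ?thesis by simp
qed

lemma sum_words_length_Suc:
  fixes f :: "bool list \<Rightarrow> 'a::comm_monoid_add"
  shows "(\<Sum>u | length u = Suc n. f u) = (\<Sum>u | length u = n. f (False # u) + f (True # u))"
proof -
  let ?A = "{u::bool list. length u = n}"
  have words_Suc: "{u::bool list. length u = Suc n} = Cons False ` ?A \<union> Cons True ` ?A"
  proof (intro equalityI subsetI)
    fix u :: "bool list"
    assume "u \<in> {u. length u = Suc n}"
    then obtain a u' where "u = a # u'" "length u' = n"
      by (auto simp: length_Suc_conv)
    then show "u \<in> Cons False ` ?A \<union> Cons True ` ?A"
      by (cases a) auto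
  qed auto
  have "(\<Sum>u | length u = Suc n. f u) = (\<Sum>u\<in>Cons False ` ?A. f u) + (\<Sum>u\<in>Cons True ` ?A. f u)"
    unfolding words_Suc by (rule sum.union_disjoint) (auto simp: finite_list_length)
  also have "\<dots> = (\<Sum>u\<in>?A. f (False # u)) + (\<Sum>u\<in>?A. f (True # u))"
    by (simp add: sum.reindex)
  finally show ?thesis by (simp add: sum.distrib)
qed

definition level_sum :: "nat \<Rightarrow> bool list \<Rightarrow> seq \<Rightarrow> real" where
  "level_sum n s x = (\<Sum>u | length u = n. e (u @ s) x)"

lemma level_sum_Suc: "level_sum (Suc n) s x = sqrt 2 * level_sum n s (shift x)"
  unfolding level_sum_def sum_words_length_Suc
  by (simp add: e_shift sum_divide_distrib[symmetric])

lemma ket_star_level_sum: "ket_star n x = 2 powr (- real n / 2) * level_sum n [] x"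
proof (cases n)
  case 0
  have "2 powr (-1/2) * (e0_eps x + e1_eps x) = (2 powr (-1/2) * sqrt 2) * (chi [True] x - chi [False] x)"
    by (simp add: e0_eps_def e1_eps_def algebra_simps)
  also have "2 powr (-1/2) * sqrt 2 = (1::real)"
    using powr_add_half[of "-1/2"] by simp
  finally have "2 powr (-1/2) * (e0_eps x + e1_eps x) = chi [True] x - chi [False] x"
    by simp
  then show ?thesis
    by (simp add: 0 ket_star_def level_sum_def e_def)
qed (simp add: ket_star_def level_sum_def)

lemma ket_word_level_sum:
  "ket_word n w x = 2 powr (- (real n + 1) / 2) * (level_sum n (False # w) x - level_sum n (True # w) x)"
  by (simp add: ket_word_def level_sum_def)

lemma koopman_apply: "koopman f x = f (shift x)"
  by (simp add: koopman_def)

lemma ket_Suc: "ket (Suc n) w = koopman (ket n w)"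
proof (rule ext)
  fix x
  have exponent: "- real (Suc n) / 2 + 1/2 = - real n / 2"
    "- (real (Suc n) + 1) / 2 + 1/2 = - (real n + 1) / 2"
    by (simp_all add: field_simps)
  have scale: "2 powr (- real (Suc n) / 2) * sqrt 2 = (2::real) powr (- real n / 2)"
    "2 powr (- (real (Suc n) + 1) / 2) * sqrt 2 = (2::real) powr (- (real n + 1) / 2)"
    by (metis powr_add_half exponent(1)) (metis powr_add_half exponent(2))
  show "ket (Suc n) w x = koopman (ket n w) x"
  proof (cases w)
    case None
    then show ?thesis
      by (simp only: ket.simps koopman_apply ket_star_level_sum level_sum_Suc
          mult.assoc[symmetric] scale(1))
  next
    case (Some v)
    then show ?thesis
      by (simp only: ket.simps koopman_apply ket_word_level_sum level_sum_Suc
          right_diff_distrib[symmetric] mult.assoc[symmetric] scale(2))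
  qed
qed

lemma shift_prepend: "shift (prepend a x) = x"
  by (simp add: shift_def prepend_def)

lemma ruelle_koopman: "ruelle (koopman f) = f"
  by (rule ext) (simp add: ruelle_def koopman_apply shift_prepend)

lemma Bdag_Bop_koopman: "Bdag (Bop (koopman f)) = (\<lambda>x. koopman f x / 2)"
  by (rule ext) (simp add: Bdag_def Bop_def ruelle_koopman koopman_apply)

lemma Bdag_funpow_ket: "(Bdag ^^ n) (ket 0 w) = (\<lambda>x. ket n w x / sqrt 2 ^ n)"
proof (induction n)
  case (Suc n)
  have "(Bdag ^^ Suc n) (ket 0 w) = Bdag (\<lambda>x. ket n w x / sqrt 2 ^ n)"
    using Suc.IH by simp
  also have "\<dots> = (\<lambda>x. ket (Suc n) w x / sqrt 2 ^ Suc n)"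
    by (rule ext) (simp add: Bdag_def koopman_apply ket_Suc ac_simps)
  finally show ?case .
qed simp

theorem proposition3p4:
  fixes w :: "bool list option" and n :: nat
  assumes "n \<ge> 1"
  shows "(Bdag ^^ n) (ket 0 w) = (\<lambda>x. 2 powr (- real n / 2) * ket n w x)
       \<and> Bdag (Bop (ket n w)) = (\<lambda>x. ket n w x / 2)"
proof
  have "sqrt 2 ^ n = (2::real) powr (real n / 2)"
    by (simp add: powr_half_sqrt[symmetric] powr_realpow[symmetric] powr_powr)
  then have coefficient: "2 powr (- real n / 2) = inverse (sqrt 2 ^ n)"
    by (simp add: powr_minus)
  show "(Bdag ^^ n) (ket 0 w) = (\<lambda>x. 2 powr (- real n / 2) * ket n w x)"
    unfolding Bdag_funpow_ket coefficient by (simp only: divide_inverse_commute)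
  obtain m where "n = Suc m"
    using assms by (cases n) auto
  then show "Bdag (Bop (ket n w)) = (\<lambda>x. ket n w x / 2)"
    by (simp add: ket_Suc Bdag_Bop_koopman)
qed

end
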